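(* Let $(Q,P)$ be a weakly quasi-lattice ordered group and let $\Lambda$ be a $P$-graph with $\mathrm{FA}(\Lambda)\neq\emptyset$. For any $g\in\mathcal{X}(\Lambda)\times Q\times\mathcal{X}(\Lambda)$, the following are equivalent: (1) $g\in\mathcal{G}(\Lambda)$; (2) $g=(\mu\cdot x,\ d(\mu)d(\nu)^{-1},\ \nu\cdot x)$ for some $x\in\mathcal{X}(\Lambda)$ and $\mu,\nu\in\Lambda$ with $s(\mu)=s(\nu)=r(x)$.
   Context: $(Q,P)$ weakly quasi-lattice ordered: $Q$ a discrete group, $P\subseteq Q$ a subsemigroup containing the identity $e$ with $P\cap P^{-1}=\{e\}$, and, with $p\le r$ meaning $pq=r$ for some $q\in P$, any two elements of $P$ with a common upper bound have a least common upper bound. A $P$-graph is a countable small category $\Lambda$ (identities $\Lambda^{(0)}$, range/source $r,s$) with a functor $d:\Lambda\to P$ with unique factorisation (if $d(\lambda)=pq$ there are unique $\mu,\nu$ with $\lambda=\mu\nu$, $d(\mu)=p$, $d(\nu)=q$). Write $\Lambda^m=d^{-1}(m)$, $\lambda\Lambda=\{\lambda\mu: s(\lambda)=r(\mu)\}$, $\mu\preceq\lambda$ iff $\lambda\in\mu\Lambda$. $\mathrm{FA}(\Lambda)$ is the set of $\lambda$ such that for all $\mu\in\lambda\Lambda,\nu\in\Lambda$ there is finite $J\subseteq\Lambda$ with $\mu\Lambda\cap\nu\Lambda=\bigcup_{\kappa\in J}\kappa\Lambda$. A filter is a nonempty hereditary and directed subset of $\Lambda$ (w.r.t. $\preceq$);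 each filter $x$ contains a unique element $r(x)\in\Lambda^{(0)}$, and $d|_x$ is injective. For a filter $x$ with $r(x)=s(\mu)$, $\mu\cdot x=\{\zeta\in\Lambda: \zeta\preceq\mu\gamma\text{ for some }\gamma\in x\}$ (a filter). Path space $\mathcal{X}(\Lambda)=\{x\text{ filter}: x\cap\mathrm{FA}(\Lambda)\neq\emptyset\}$. For $x\in\mathcal{X}(\Lambda)$, $m\in P$ with $x\cap\Lambda^m\neq\emptyset$ (write $x\in\mathrm{dom}(m)$), $x(0,m)$ is the unique element of $x\cap\Lambda^m$ and $x\cdot m=\{\mu: x(0,m)\mu\in x\}$. The path groupoid $\mathcal{G}(\Lambda)$ is the set of $(x,q,y)\in\mathcal{X}(\Lambda)\times Q\times\mathcal{X}(\Lambda)$ for which there are $m,n\in P$ with $q=mn^{-1}$, $x\in\mathrm{dom}(m)$, $y\in\mathrm{dom}(n)$, $x\cdot m=y\cdot n$. *)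

theory Defs
  imports "HOL-Algebra.Group" "HOL-Library.Countable_Set"
begin

text \<open>The group Q is a HOL-Algebra group (discreteness is irrelevant algebraically);
  P is a subset of its carrier.  p \<le> r iff p q = r for some q in P.\<close>

definition qle :: "('q, 'b) monoid_scheme \<Rightarrow> 'q set \<Rightarrow> 'q \<Rightarrow> 'q \<Rightarrow> bool" where
  "qle Q P p r \<longleftrightarrow> (\<exists>q\<in>P. p \<otimes>\<^bsub>Q\<^esub> q = r)"

definition wqlo :: "('q, 'b) monoid_scheme \<Rightarrow> 'q set \<Rightarrow> bool" where
  "wqlo Q P \<longleftrightarrow>
     group Q \<and> P \<subseteq> carrier Q \<and> \<one>\<^bsub>Q\<^esub> \<in> P \<and>
     (\<forall>p\<in>P. \<forall>q\<in>P. p \<otimes>\<^bsub>Q\<^esub> q \<in> P) \<and>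
     P \<inter> (\<lambda>p. inv\<^bsub>Q\<^esub> p) ` P = {\<one>\<^bsub>Q\<^esub>} \<and>
     (\<forall>p\<in>P. \<forall>q\<in>P. (\<exists>r\<in>P. qle Q P p r \<and> qle Q P q r) \<longrightarrow>
        (\<exists>l\<in>P. qle Q P p l \<and> qle Q P q l \<and>
           (\<forall>r\<in>P. qle Q P p r \<and> qle Q P q r \<longrightarrow> qle Q P l r)))"

text \<open>A small category given by its set of morphisms, the set of identities
  (objects), range, source, (partial) composition, and the degree functor.\<close>

record ('m, 'q) pgraph =
  pg_mor :: "'m set"
  pg_obj :: "'m set"
  pg_r   :: "'m \<Rightarrow> 'm"
  pg_s   :: "'m \<Rightarrow> 'm"
  pg_comp :: "'m \<Rightarrow> 'm \<Rightarrow> 'm"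
  pg_d   :: "'m \<Rightarrow> 'q"

definition is_pgraph :: "('q, 'b) monoid_scheme \<Rightarrow> 'q set \<Rightarrow> ('m, 'q) pgraph \<Rightarrow> bool" where
  "is_pgraph Q P L \<longleftrightarrow>
     countable (pg_mor L) \<and>
     pg_obj L \<subseteq> pg_mor L \<and>
     (\<forall>l\<in>pg_mor L. pg_r L l \<in> pg_obj L \<and> pg_s L l \<in> pg_obj L) \<and>
     (\<forall>v\<in>pg_obj L. pg_r L v = v \<and> pg_s L v = v) \<and>
     (\<forall>l\<in>pg_mor L. \<forall>m\<in>pg_mor L. pg_s L l = pg_r L m \<longrightarrow>
        pg_comp L l m \<in> pg_mor L \<and> pg_r L (pg_comp L l m) = pg_r L l \<and>
        pg_s L (pg_comp L l m) = pg_s L m) \<and>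
     (\<forall>l\<in>pg_mor L. \<forall>m\<in>pg_mor L. \<forall>n\<in>pg_mor L.
        pg_s L l = pg_r L m \<longrightarrow> pg_s L m = pg_r L n \<longrightarrow>
        pg_comp L (pg_comp L l m) n = pg_comp L l (pg_comp L m n)) \<and>
     (\<forall>l\<in>pg_mor L. pg_comp L (pg_r L l) l = l \<and> pg_comp L l (pg_s L l) = l) \<and>
     (\<forall>l\<in>pg_mor L. pg_d L l \<in> P) \<and>
     (\<forall>v\<in>pg_obj L. pg_d L v = \<one>\<^bsub>Q\<^esub>) \<and>
     (\<forall>l\<in>pg_mor L. \<forall>m\<in>pg_mor L. pg_s L l = pg_r L m \<longrightarrow>
        pg_d L (pg_comp L l m) = pg_d L l \<otimes>\<^bsub>Q\<^esub> pg_d L m) \<and>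
     (\<forall>l\<in>pg_mor L. \<forall>p\<in>P. \<forall>q\<in>P. pg_d L l = p \<otimes>\<^bsub>Q\<^esub> q \<longrightarrow>
        (\<exists>!(m, n). m \<in> pg_mor L \<and> n \<in> pg_mor L \<and> pg_s L m = pg_r L n \<and>
            pg_comp L m n = l \<and> pg_d L m = p \<and> pg_d L n = q))"

definition ext_set :: "('m, 'q) pgraph \<Rightarrow> 'm \<Rightarrow> 'm set" where
  "ext_set L l = {pg_comp L l m | m. m \<in> pg_mor L \<and> pg_s L l = pg_r L m}"

definition pprec :: "('m, 'q) pgraph \<Rightarrow> 'm \<Rightarrow> 'm \<Rightarrow> bool" where
  "pprec L m l \<longleftrightarrow> m \<in> pg_mor L \<and> l \<in> ext_set L m"

definition FA :: "('m, 'q) pgraph \<Rightarrow> 'm set" where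
  "FA L = {l \<in> pg_mor L. \<forall>m\<in>ext_set L l. \<forall>n\<in>pg_mor L.
      \<exists>J. finite J \<and> J \<subseteq> pg_mor L \<and> ext_set L m \<inter> ext_set L n = (\<Union>k\<in>J. ext_set L k)}"

definition is_filter :: "('m, 'q) pgraph \<Rightarrow> 'm set \<Rightarrow> bool" where
  "is_filter L x \<longleftrightarrow> x \<subseteq> pg_mor L \<and> x \<noteq> {} \<and>
     (\<forall>l\<in>x. \<forall>m. pprec L m l \<longrightarrow> m \<in> x) \<and>
     (\<forall>l\<in>x. \<forall>m\<in>x. \<exists>n\<in>x. pprec L l n \<and> pprec L m n)"

definition filter_r :: "('m, 'q) pgraph \<Rightarrow> 'm set \<Rightarrow> 'm" where
  "filter_r L x = (THE v. v \<in> x \<inter> pg_obj L)"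

definition fmult :: "('m, 'q) pgraph \<Rightarrow> 'm \<Rightarrow> 'm set \<Rightarrow> 'm set" where
  "fmult L m x = {z \<in> pg_mor L. \<exists>g\<in>x. pprec L z (pg_comp L m g)}"

definition path_space :: "('m, 'q) pgraph \<Rightarrow> 'm set set" where
  "path_space L = {x. is_filter L x \<and> x \<inter> FA L \<noteq> {}}"

definition in_dom :: "('m, 'q) pgraph \<Rightarrow> 'm set \<Rightarrow> 'q \<Rightarrow> bool" where
  "in_dom L x p \<longleftrightarrow> (\<exists>l\<in>x. pg_d L l = p)"

definition seg :: "('m, 'q) pgraph \<Rightarrow> 'm set \<Rightarrow> 'q \<Rightarrow> 'm" where
  "seg L x p = (THE l. l \<in> x \<and> pg_d L l = p)"

definition shift :: "('m, 'q) pgraph \<Rightarrow> 'm set \<Rightarrow> 'q \<Rightarrow> 'm set" where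
  "shift L x p = {m \<in> pg_mor L. pg_s L (seg L x p) = pg_r L m \<and> pg_comp L (seg L x p) m \<in> x}"

definition path_groupoid ::
  "('q, 'b) monoid_scheme \<Rightarrow> 'q set \<Rightarrow> ('m, 'q) pgraph \<Rightarrow> ('m set \<times> 'q \<times> 'm set) set" where
  "path_groupoid Q P L = {(x, q, y). x \<in> path_space L \<and> y \<in> path_space L \<and>
     (\<exists>m\<in>P. \<exists>n\<in>P. q = m \<otimes>\<^bsub>Q\<^esub> inv\<^bsub>Q\<^esub> n \<and> in_dom L x m \<and> in_dom L y n \<and>
        shift L x m = shift L y n)}"

end

theory Submission
  imports Defs
begin

text \<open>
  If \<open>x \<cdot> m = y \<cdot> n = z\<close>, put \<open>\<mu> = x(0,m)\<close> and \<open>\<nu> = y(0,n)\<close>; then \<open>x = \<mu> \<cdot> z\<close> and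
  \<open>y = \<nu> \<cdot> z\<close> with \<open>s(\<mu>) = s(\<nu>) = r(z)\<close>.  The shifted filter \<open>z\<close> is again in the path space:
  a finitely aligned element of \<open>x\<close> above \<open>\<mu>\<close> has the form \<open>\<mu>\<lambda>\<close> with \<open>\<lambda> \<in> z\<close>, and \<open>\<lambda>\<close> is
  finitely aligned because left translation by \<open>\<mu>\<close> is injective (unique factorisation) and maps
  \<open>\<alpha>\<Lambda> \<inter> \<beta>\<Lambda>\<close> onto \<open>\<mu>\<alpha>\<Lambda> \<inter> \<mu>\<beta>\<Lambda>\<close>.  Conversely \<open>\<mu> \<in> \<mu> \<cdot> x\<close> and \<open>(\<mu> \<cdot> x) \<cdot> d(\<mu>) = x\<close>
  by left cancellation, so \<open>\<mu> \<cdot> x\<close> and \<open>\<nu> \<cdot> x\<close> have the common tail \<open>x\<close>.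
\<close>

definition finitely_generated :: "('m, 'q) pgraph \<Rightarrow> 'm set \<Rightarrow> bool" where
  "finitely_generated L S \<longleftrightarrow>
     (\<exists>J. finite J \<and> J \<subseteq> pg_mor L \<and> S = (\<Union>k\<in>J. ext_set L k))"

lemma mem_FA_iff:
  "l \<in> FA L \<longleftrightarrow> l \<in> pg_mor L \<and>
     (\<forall>a\<in>ext_set L l. \<forall>n\<in>pg_mor L. finitely_generated L (ext_set L a \<inter> ext_set L n))"
  by (simp add: FA_def finitely_generated_def)

locale p_graph = group Q for Q :: "('q, 'b) monoid_scheme" +
  fixes P :: "'q set" and L :: "('m, 'q) pgraph"
  assumes P_carrier: "P \<subseteq> carrier Q" and is_pgraph: "is_pgraph Q P L"
begin

abbreviation comp :: "'m \<Rightarrow> 'm \<Rightarrow> 'm" (infixl "\<star>" 70)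
  where "a \<star> b \<equiv> pg_comp L a b"

lemma obj_in_mor: "v \<in> pg_obj L \<Longrightarrow> v \<in> pg_mor L"
  using is_pgraph unfolding is_pgraph_def by (elim conjE) blast

lemma r_in_obj: "l \<in> pg_mor L \<Longrightarrow> pg_r L l \<in> pg_obj L"
  using is_pgraph unfolding is_pgraph_def by (elim conjE) blast

lemma s_in_obj: "l \<in> pg_mor L \<Longrightarrow> pg_s L l \<in> pg_obj L"
  using is_pgraph unfolding is_pgraph_def by (elim conjE) blast

lemma r_obj: "v \<in> pg_obj L \<Longrightarrow> pg_r L v = v"
  using is_pgraph unfolding is_pgraph_def by (elim conjE) blast

lemma s_obj: "v \<in> pg_obj L \<Longrightarrow> pg_s L v = v"
  using is_pgraph unfolding is_pgraph_def by (elim conjE) blast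

lemma
  assumes "l \<in> pg_mor L" "m \<in> pg_mor L" "pg_s L l = pg_r L m"
  shows comp_in_mor: "l \<star> m \<in> pg_mor L"
    and r_comp: "pg_r L (l \<star> m) = pg_r L l"
    and s_comp: "pg_s L (l \<star> m) = pg_s L m"
    and d_comp: "pg_d L (l \<star> m) = pg_d L l \<otimes>\<^bsub>Q\<^esub> pg_d L m"
  using is_pgraph assms unfolding is_pgraph_def by (elim conjE; blast)+

lemma comp_assoc:
  "\<lbrakk>l \<in> pg_mor L; m \<in> pg_mor L; n \<in> pg_mor L; pg_s L l = pg_r L m; pg_s L m = pg_r L n\<rbrakk>
   \<Longrightarrow> l \<star> m \<star> n = l \<star> (m \<star> n)"
  using is_pgraph unfolding is_pgraph_def by (elim conjE) blast

lemma r_comp_left: "l \<in> pg_mor L \<Longrightarrow> pg_r L l \<star> l = l"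
  using is_pgraph unfolding is_pgraph_def by (elim conjE) blast

lemma comp_s_right: "l \<in> pg_mor L \<Longrightarrow> l \<star> pg_s L l = l"
  using is_pgraph unfolding is_pgraph_def by (elim conjE) blast

lemma d_in_P: "l \<in> pg_mor L \<Longrightarrow> pg_d L l \<in> P"
  using is_pgraph unfolding is_pgraph_def by (elim conjE) blast

lemma d_in_carrier: "l \<in> pg_mor L \<Longrightarrow> pg_d L l \<in> carrier Q"
  using d_in_P P_carrier by blast

lemma ex1_factorisation:
  assumes "l \<in> pg_mor L" "p \<in> P" "q \<in> P" "pg_d L l = p \<otimes>\<^bsub>Q\<^esub> q"
  shows "\<exists>!(m, n). m \<in> pg_mor L \<and> n \<in> pg_mor L \<and> pg_s L m = pg_r L n \<and>
     m \<star> n = l \<and> pg_d L m = p \<and> pg_d L n = q"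
proof -
  have "\<forall>l\<in>pg_mor L. \<forall>p\<in>P. \<forall>q\<in>P. pg_d L l = p \<otimes>\<^bsub>Q\<^esub> q \<longrightarrow>
     (\<exists>!(m, n). m \<in> pg_mor L \<and> n \<in> pg_mor L \<and> pg_s L m = pg_r L n \<and>
        m \<star> n = l \<and> pg_d L m = p \<and> pg_d L n = q)"
    using is_pgraph unfolding is_pgraph_def by (elim conjE)
  then show ?thesis
    using assms by simp
qed

lemma factorisation_unique:
  assumes a: "a \<in> pg_mor L" and b: "b \<in> pg_mor L" and ab: "pg_s L a = pg_r L b"
    and c: "c \<in> pg_mor L" and e: "e \<in> pg_mor L" and ce: "pg_s L c = pg_r L e"
    and eq: "a \<star> b = c \<star> e" and d_eq: "pg_d L a = pg_d L c"
  shows "a = c \<and> b = e"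
proof -
  have "pg_d L a \<otimes>\<^bsub>Q\<^esub> pg_d L b = pg_d L a \<otimes>\<^bsub>Q\<^esub> pg_d L e"
    using d_comp[OF a b ab] d_comp[OF c e ce] eq d_eq by simp
  then have d_eq': "pg_d L b = pg_d L e"
    using d_in_carrier[OF a] d_in_carrier[OF b] d_in_carrier[OF e] by simp
  let ?fact = "\<lambda>(m, n). m \<in> pg_mor L \<and> n \<in> pg_mor L \<and> pg_s L m = pg_r L n \<and>
     m \<star> n = a \<star> b \<and> pg_d L m = pg_d L a \<and> pg_d L n = pg_d L b"
  have unique: "\<exists>!mn. ?fact mn"
    using ex1_factorisation[OF comp_in_mor[OF a b ab] d_in_P[OF a] d_in_P[OF b] d_comp[OF a b ab]] .
  then obtain w where w: "\<forall>mn. ?fact mn \<longrightarrow> mn = w"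
    by (elim ex1E) blast
  have "?fact (a, b)" and "?fact (c, e)"
    using a b ab c e ce eq d_eq d_eq' by simp_all
  then show ?thesis
    using w by blast
qed

lemma comp_left_cancel:
  "\<lbrakk>u \<in> pg_mor L; a \<in> pg_mor L; b \<in> pg_mor L; pg_s L u = pg_r L a; pg_s L u = pg_r L b;
    u \<star> a = u \<star> b\<rbrakk> \<Longrightarrow> a = b"
  using factorisation_unique[of u a u b] by simp

lemma pprec_iff:
  "pprec L m l \<longleftrightarrow> m \<in> pg_mor L \<and> (\<exists>k\<in>pg_mor L. pg_s L m = pg_r L k \<and> l = m \<star> k)"
  unfolding pprec_def ext_set_def by blast

lemma mem_ext_set_iff: "l \<in> pg_mor L \<Longrightarrow> t \<in> ext_set L l \<longleftrightarrow> pprec L l t"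
  by (simp add: pprec_def)

lemma pprec_comp: "\<lbrakk>m \<in> pg_mor L; k \<in> pg_mor L; pg_s L m = pg_r L k\<rbrakk> \<Longrightarrow> pprec L m (m \<star> k)"
  unfolding pprec_iff by blast

lemma pprec_refl: "m \<in> pg_mor L \<Longrightarrow> pprec L m m"
  using pprec_comp[of m "pg_s L m"] comp_s_right obj_in_mor s_in_obj r_obj by simp

lemma pprec_r_left: "l \<in> pg_mor L \<Longrightarrow> pprec L (pg_r L l) l"
  using pprec_comp[of "pg_r L l" l] r_comp_left obj_in_mor r_in_obj s_obj by simp

lemma pprec_D: "pprec L m l \<Longrightarrow> m \<in> pg_mor L \<and> l \<in> pg_mor L \<and> pg_r L l = pg_r L m"
  unfolding pprec_iff using comp_in_mor r_comp by blast

lemma pprec_trans: assumes "pprec L a b" and "pprec L b c" shows "pprec L a c"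
proof -
  obtain k where a: "a \<in> pg_mor L" and k: "k \<in> pg_mor L" "pg_s L a = pg_r L k" and b: "b = a \<star> k"
    using assms(1) unfolding pprec_iff by blast
  obtain j where j: "j \<in> pg_mor L" "pg_s L b = pg_r L j" and c: "c = b \<star> j"
    using assms(2) unfolding pprec_iff by blast
  have kj: "pg_s L k = pg_r L j"
    using j(2) b s_comp[OF a k] by simp
  have "c = a \<star> (k \<star> j)"
    using c b comp_assoc[OF a k(1) j(1) k(2) kj] by simp
  then show ?thesis
    using pprec_comp[OF a comp_in_mor[OF k(1) j(1) kj]] r_comp[OF k(1) j(1) kj] k(2) by simp
qed

lemma pprec_comp_left_iff:
  assumes u: "u \<in> pg_mor L" and a: "a \<in> pg_mor L" and b: "b \<in> pg_mor L"
    and ua: "pg_s L u = pg_r L a" and ub: "pg_s L u = pg_r L b"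
  shows "pprec L (u \<star> a) (u \<star> b) \<longleftrightarrow> pprec L a b"
proof
  assume "pprec L (u \<star> a) (u \<star> b)"
  then obtain k where k: "k \<in> pg_mor L" "pg_s L a = pg_r L k" and "u \<star> b = u \<star> a \<star> k"
    unfolding pprec_iff using s_comp[OF u a ua] by auto
  then have "u \<star> b = u \<star> (a \<star> k)"
    using comp_assoc[OF u a k(1) ua k(2)] by simp
  then have "b = a \<star> k"
    using comp_left_cancel[OF u b comp_in_mor[OF a k]] ub ua r_comp[OF a k] by simp
  then show "pprec L a b"
    using pprec_comp[OF a k] by simp
next
  assume "pprec L a b"
  then obtain k where k: "k \<in> pg_mor L" "pg_s L a = pg_r L k" and "b = a \<star> k"
    unfolding pprec_iff by blast
  then have "u \<star> b = u \<star> a \<star> k"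
    using comp_assoc[OF u a k(1) ua k(2)] by simp
  then show "pprec L (u \<star> a) (u \<star> b)"
    using pprec_comp[OF comp_in_mor[OF u a ua] k(1)] s_comp[OF u a ua] k(2) by simp
qed

lemma ext_set_subset: "l \<in> pg_mor L \<Longrightarrow> ext_set L l \<subseteq> {t \<in> pg_mor L. pg_r L t = pg_r L l}"
  unfolding ext_set_def using comp_in_mor r_comp by auto

lemma ext_set_disjoint:
  assumes a: "a \<in> pg_mor L" and b: "b \<in> pg_mor L" and r_neq: "pg_r L a \<noteq> pg_r L b"
  shows "ext_set L a \<inter> ext_set L b = {}"
proof (intro equals0I)
  fix t assume "t \<in> ext_set L a \<inter> ext_set L b"
  then have "pg_r L t = pg_r L a" and "pg_r L t = pg_r L b"
    using ext_set_subset[OF a] ext_set_subset[OF b] by auto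
  with r_neq show False by simp
qed

lemma ext_set_comp:
  assumes u: "u \<in> pg_mor L" and a: "a \<in> pg_mor L" and ua: "pg_s L u = pg_r L a"
  shows "ext_set L (u \<star> a) = (\<star>) u ` ext_set L a"
proof (intro equalityI subsetI)
  fix t assume "t \<in> ext_set L (u \<star> a)"
  then obtain k where k: "k \<in> pg_mor L" "pg_s L a = pg_r L k" and t: "t = u \<star> a \<star> k"
    unfolding ext_set_def using s_comp[OF u a ua] by auto
  then show "t \<in> (\<star>) u ` ext_set L a"
    using comp_assoc[OF u a k(1) ua k(2)] unfolding ext_set_def by blast
next
  fix t assume "t \<in> (\<star>) u ` ext_set L a"
  then obtain k where k: "k \<in> pg_mor L" "pg_s L a = pg_r L k" and "t = u \<star> (a \<star> k)"
    unfolding ext_set_def by blast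
  then have "t = u \<star> a \<star> k" and "pg_s L (u \<star> a) = pg_r L k"
    using comp_assoc[OF u a k(1) ua k(2)] s_comp[OF u a ua] by simp_all
  then show "t \<in> ext_set L (u \<star> a)"
    unfolding ext_set_def using k(1) by blast
qed

lemma inj_on_comp_left: "u \<in> pg_mor L \<Longrightarrow> inj_on ((\<star>) u) {t \<in> pg_mor L. pg_r L t = pg_s L u}"
  by (rule inj_onI) (simp add: comp_left_cancel)

lemma finitely_generated_empty: "finitely_generated L {}"
  unfolding finitely_generated_def by (rule exI[of _ "{}"]) simp

lemma finitely_generated_comp_left_cancel:
  assumes u: "u \<in> pg_mor L" and S: "S \<subseteq> {t \<in> pg_mor L. pg_r L t = pg_s L u}"
    and fg: "finitely_generated L ((\<star>) u ` S)"
  shows "finitely_generated L S"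
proof -
  let ?D = "{t \<in> pg_mor L. pg_r L t = pg_s L u}"
  obtain J0 where J0: "finite J0" "J0 \<subseteq> pg_mor L" and S_eq: "(\<star>) u ` S = (\<Union>k\<in>J0. ext_set L k)"
    using fg unfolding finitely_generated_def by blast
  define J where "J = (\<star>) u -` J0 \<inter> ?D"
  have inj: "inj_on ((\<star>) u) ?D"
    using inj_on_comp_left[OF u] .
  have J_D: "J \<subseteq> ?D"
    unfolding J_def by blast
  \<comment> \<open>Each generator lies in \<open>u S\<close>, so the generators are the \<open>u\<close>-translates of \<open>J\<close>.\<close>
  have "J0 \<subseteq> (\<star>) u ` S"
  proof
    fix k assume k: "k \<in> J0"
    then have "k \<in> ext_set L k"
      using J0(2) mem_ext_set_iff pprec_refl by blast
    with k show "k \<in> (\<star>) u ` S"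
      unfolding S_eq by blast
  qed
  then have J0_eq: "J0 = (\<star>) u ` J"
    using S unfolding J_def by blast
  have UN_D: "(\<Union>k\<in>J. ext_set L k) \<subseteq> ?D"
  proof (intro UN_least)
    fix k assume "k \<in> J"
    then have "k \<in> pg_mor L" and "pg_r L k = pg_s L u"
      using J_D by auto
    then show "ext_set L k \<subseteq> ?D"
      using ext_set_subset[of k] by auto
  qed
  have "(\<star>) u ` (\<Union>k\<in>J. ext_set L k) = (\<Union>k\<in>J. ext_set L (u \<star> k))"
    unfolding image_UN using ext_set_comp[OF u] J_D by (intro SUP_cong refl) auto
  also have "\<dots> = (\<star>) u ` S"
    unfolding S_eq J0_eq by simp
  finally have "(\<Union>k\<in>J. ext_set L k) = S"
    using inj_on_image_eq_iff[OF inj UN_D S] by simp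
  moreover have "finite J"
    unfolding J_def using finite_vimage_IntI[OF J0(1) inj] .
  ultimately show ?thesis
    unfolding finitely_generated_def using J_D by blast
qed

lemma FA_comp_left_cancel:
  assumes u: "u \<in> pg_mor L" and k: "k \<in> pg_mor L" and uk: "pg_s L u = pg_r L k"
    and FA: "u \<star> k \<in> FA L"
  shows "k \<in> FA L"
  unfolding mem_FA_iff
proof (intro conjI ballI k)
  fix a n assume a: "a \<in> ext_set L k" and n: "n \<in> pg_mor L"
  have a_mor: "a \<in> pg_mor L" and ra: "pg_r L a = pg_s L u"
    using a mem_ext_set_iff[OF k] pprec_D uk by auto
  show "finitely_generated L (ext_set L a \<inter> ext_set L n)"
  proof (cases "pg_r L n = pg_s L u")
    case False
    then show ?thesis
      using ext_set_disjoint[OF a_mor n] ra finitely_generated_empty by simp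
  next
    case True
    have "u \<star> a \<in> ext_set L (u \<star> k)"
      using ext_set_comp[OF u k uk] a by blast
    moreover have "u \<star> n \<in> pg_mor L"
      using comp_in_mor[OF u n] True by simp
    ultimately have "finitely_generated L (ext_set L (u \<star> a) \<inter> ext_set L (u \<star> n))"
      using FA unfolding mem_FA_iff by blast
    moreover have "ext_set L (u \<star> a) \<inter> ext_set L (u \<star> n) = (\<star>) u ` (ext_set L a \<inter> ext_set L n)"
      using ext_set_comp[OF u a_mor] ext_set_comp[OF u n] ra True
        inj_on_image_Int[OF inj_on_comp_left[OF u]] ext_set_subset[OF a_mor] ext_set_subset[OF n]
      by simp
    moreover have "ext_set L a \<inter> ext_set L n \<subseteq> {t \<in> pg_mor L. pg_r L t = pg_s L u}"
      using ext_set_subset[OF a_mor] ra by auto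
    ultimately show ?thesis
      using finitely_generated_comp_left_cancel[OF u] by simp
  qed
qed

lemma FA_mono: assumes "l \<in> FA L" and "pprec L l l'" shows "l' \<in> FA L"
proof -
  have "ext_set L l' \<subseteq> ext_set L l"
    using assms(2) mem_ext_set_iff pprec_D pprec_trans by blast
  then show ?thesis
    using assms pprec_D unfolding mem_FA_iff by blast
qed

lemma filter_mor: "is_filter L x \<Longrightarrow> l \<in> x \<Longrightarrow> l \<in> pg_mor L"
  unfolding is_filter_def by blast

lemma filter_hereditary: "is_filter L x \<Longrightarrow> l \<in> x \<Longrightarrow> pprec L m l \<Longrightarrow> m \<in> x"
  unfolding is_filter_def by blast

lemma filter_directed: "is_filter L x \<Longrightarrow> a \<in> x \<Longrightarrow> b \<in> x \<Longrightarrow> \<exists>n\<in>x. pprec L a n \<and> pprec L b n"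
  unfolding is_filter_def by blast

lemma filter_r_eq:
  assumes x: "is_filter L x" and l: "l \<in> x"
  shows "filter_r L x = pg_r L l"
  unfolding filter_r_def
proof (rule the_equality)
  have "l \<in> pg_mor L"
    using filter_mor[OF x l] .
  then show "pg_r L l \<in> x \<inter> pg_obj L"
    using filter_hereditary[OF x l pprec_r_left] r_in_obj by simp
next
  fix v assume v: "v \<in> x \<inter> pg_obj L"
  then obtain n where vn: "pprec L v n" and ln: "pprec L l n"
    using filter_directed[OF x _ l] by blast
  have "pg_r L v = v"
    using r_obj v by simp
  then show "v = pg_r L l"
    using pprec_D[OF vn] pprec_D[OF ln] by simp
qed

lemma filter_r_mem: assumes x: "is_filter L x" shows "filter_r L x \<in> x"
proof -
  obtain l where l: "l \<in> x"
    using x unfolding is_filter_def by blast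
  then show ?thesis
    using filter_r_eq[OF x l] filter_hereditary[OF x l pprec_r_left[OF filter_mor[OF x l]]] by simp
qed

lemma inj_on_d_filter: assumes x: "is_filter L x" shows "inj_on (pg_d L) x"
proof (rule inj_onI)
  fix a b assume a: "a \<in> x" and b: "b \<in> x" and d_eq: "pg_d L a = pg_d L b"
  obtain n where "pprec L a n" and "pprec L b n"
    using filter_directed[OF x a b] by blast
  then obtain k j where "a \<in> pg_mor L" "k \<in> pg_mor L" "pg_s L a = pg_r L k" "n = a \<star> k"
    and "b \<in> pg_mor L" "j \<in> pg_mor L" "pg_s L b = pg_r L j" "n = b \<star> j"
    unfolding pprec_iff by blast
  then show "a = b"
    using factorisation_unique[of a k b j] d_eq by simp
qed

lemma seg_eq: "is_filter L x \<Longrightarrow> l \<in> x \<Longrightarrow> seg L x (pg_d L l) = l"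
  unfolding seg_def using inj_on_d_filter by (auto intro: the_equality dest: inj_onD)

lemma shift_eq:
  "is_filter L x \<Longrightarrow> u \<in> x \<Longrightarrow>
   shift L x (pg_d L u) = {t \<in> pg_mor L. pg_s L u = pg_r L t \<and> u \<star> t \<in> x}"
  by (simp add: shift_def seg_eq)

lemma shift_factor:
  assumes x: "is_filter L x" and y: "y \<in> x" and uy: "pprec L u y"
  obtains y' where "y' \<in> shift L x (pg_d L u)" and "y = u \<star> y'"
proof -
  have u: "u \<in> x"
    using filter_hereditary[OF x y uy] .
  obtain y' where "y' \<in> pg_mor L" "pg_s L u = pg_r L y'" "y = u \<star> y'"
    using uy unfolding pprec_iff by blast
  then show ?thesis
    using that y unfolding shift_eq[OF x u] by blast
qed

lemma s_mem_shift:
  assumes x: "is_filter L x" and u: "u \<in> x"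
  shows "pg_s L u \<in> shift L x (pg_d L u)"
proof -
  have u_mor: "u \<in> pg_mor L"
    using filter_mor[OF x u] .
  then have "pg_s L u \<in> pg_mor L" and "pg_r L (pg_s L u) = pg_s L u"
    using obj_in_mor s_in_obj r_obj by simp_all
  then show ?thesis
    unfolding shift_eq[OF x u] using comp_s_right[OF u_mor] u by simp
qed

lemma is_filter_shift:
  assumes x: "is_filter L x" and u: "u \<in> x"
  shows "is_filter L (shift L x (pg_d L u))"
proof -
  have u_mor: "u \<in> pg_mor L"
    using filter_mor[OF x u] .
  show ?thesis
    unfolding is_filter_def
  proof (intro conjI ballI allI impI)
    show "shift L x (pg_d L u) \<subseteq> pg_mor L"
      unfolding shift_eq[OF x u] by blast
    show "shift L x (pg_d L u) \<noteq> {}"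
      using s_mem_shift[OF x u] by blast
  next
    fix l a assume l: "l \<in> shift L x (pg_d L u)" and al: "pprec L a l"
    have l_mor: "l \<in> pg_mor L" and ul: "pg_s L u = pg_r L l" and "u \<star> l \<in> x"
      using l unfolding shift_eq[OF x u] by auto
    moreover have a_mor: "a \<in> pg_mor L" and ua: "pg_s L u = pg_r L a"
      using pprec_D[OF al] ul by auto
    ultimately have "u \<star> a \<in> x"
      using filter_hereditary[OF x] pprec_comp_left_iff[OF u_mor a_mor l_mor ua ul] al by blast
    then show "a \<in> shift L x (pg_d L u)"
      unfolding shift_eq[OF x u] using a_mor ua by simp
  next
    fix a b assume a: "a \<in> shift L x (pg_d L u)" and b: "b \<in> shift L x (pg_d L u)"
    have a_mor: "a \<in> pg_mor L" and ua: "pg_s L u = pg_r L a" and "u \<star> a \<in> x"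
      using a unfolding shift_eq[OF x u] by auto
    have b_mor: "b \<in> pg_mor L" and ub: "pg_s L u = pg_r L b" and "u \<star> b \<in> x"
      using b unfolding shift_eq[OF x u] by auto
    then obtain y where y: "y \<in> x" "pprec L (u \<star> a) y" "pprec L (u \<star> b) y"
      using filter_directed[OF x \<open>u \<star> a \<in> x\<close>] by blast
    then have "pprec L u y"
      using pprec_trans[OF pprec_comp[OF u_mor a_mor ua]] by blast
    then obtain y' where y': "y' \<in> shift L x (pg_d L u)" and y_eq: "y = u \<star> y'"
      using shift_factor[OF x y(1)] by blast
    have y'_mor: "y' \<in> pg_mor L" and uy': "pg_s L u = pg_r L y'"
      using y' unfolding shift_eq[OF x u] by auto
    have "pprec L a y'" and "pprec L b y'"
      using y y_eq pprec_comp_left_iff[OF u_mor a_mor y'_mor ua uy']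
        pprec_comp_left_iff[OF u_mor b_mor y'_mor ub uy'] by simp_all
    with y' show "\<exists>n\<in>shift L x (pg_d L u). pprec L a n \<and> pprec L b n"
      by blast
  qed
qed

lemma filter_r_shift:
  "is_filter L x \<Longrightarrow> u \<in> x \<Longrightarrow> filter_r L (shift L x (pg_d L u)) = pg_s L u"
  using filter_r_eq[OF is_filter_shift s_mem_shift] r_obj s_in_obj filter_mor by simp

lemma fmult_shift:
  assumes x: "is_filter L x" and u: "u \<in> x"
  shows "fmult L u (shift L x (pg_d L u)) = x"
proof (intro equalityI subsetI)
  fix t assume "t \<in> fmult L u (shift L x (pg_d L u))"
  then obtain g where "g \<in> shift L x (pg_d L u)" and tg: "pprec L t (u \<star> g)"
    unfolding fmult_def by blast
  then have "u \<star> g \<in> x"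
    unfolding shift_eq[OF x u] by blast
  then show "t \<in> x"
    using filter_hereditary[OF x _ tg] by blast
next
  fix t assume t: "t \<in> x"
  obtain y where y: "y \<in> x" "pprec L t y" "pprec L u y"
    using filter_directed[OF x t u] by blast
  then obtain y' where "y' \<in> shift L x (pg_d L u)" and "y = u \<star> y'"
    using shift_factor[OF x] by blast
  then show "t \<in> fmult L u (shift L x (pg_d L u))"
    unfolding fmult_def using filter_mor[OF x t] y(2) by blast
qed

lemma shift_in_path_space:
  assumes x: "x \<in> path_space L" and u: "u \<in> x"
  shows "shift L x (pg_d L u) \<in> path_space L"
proof -
  have x_filter: "is_filter L x"
    using x unfolding path_space_def by blast
  obtain a where a: "a \<in> x" "a \<in> FA L"
    using x unfolding path_space_def by blast
  obtain y where y: "y \<in> x" "pprec L a y" "pprec L u y"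
    using filter_directed[OF x_filter a(1) u] by blast
  then obtain y' where y': "y' \<in> shift L x (pg_d L u)" and y_eq: "y = u \<star> y'"
    using shift_factor[OF x_filter] by blast
  have "y' \<in> pg_mor L" and "pg_s L u = pg_r L y'"
    using y' unfolding shift_eq[OF x_filter u] by auto
  then have "y' \<in> FA L"
    using FA_comp_left_cancel[OF filter_mor[OF x_filter u]] FA_mono[OF a(2) y(2)] y_eq by simp
  then show ?thesis
    unfolding path_space_def using is_filter_shift[OF x_filter u] y' by blast
qed

lemma mem_fmult_self:
  assumes x: "is_filter L x" and m: "m \<in> pg_mor L" and sm: "pg_s L m = filter_r L x"
  shows "m \<in> fmult L m x"
proof -
  have "m \<star> filter_r L x = m"
    using comp_s_right[OF m] sm by simp
  then show ?thesis
    unfolding fmult_def using m filter_r_mem[OF x] pprec_refl[OF m] by force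
qed

lemma shift_fmult:
  assumes x: "is_filter L x" and m: "m \<in> pg_mor L" and sm: "pg_s L m = filter_r L x"
    and mx: "is_filter L (fmult L m x)"
  shows "shift L (fmult L m x) (pg_d L m) = x"
proof (intro equalityI subsetI)
  fix t assume "t \<in> shift L (fmult L m x) (pg_d L m)"
  then have t: "t \<in> pg_mor L" "pg_s L m = pg_r L t" and "m \<star> t \<in> fmult L m x"
    unfolding shift_eq[OF mx mem_fmult_self[OF x m sm]] by auto
  then obtain g where g: "g \<in> x" and "pprec L (m \<star> t) (m \<star> g)"
    unfolding fmult_def by blast
  moreover have "g \<in> pg_mor L" and "pg_s L m = pg_r L g"
    using filter_mor[OF x g] filter_r_eq[OF x g] sm by simp_all
  ultimately have "pprec L t g"
    using pprec_comp_left_iff[OF m t(1)] t(2) by simp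
  then show "t \<in> x"
    using filter_hereditary[OF x g] by blast
next
  fix t assume t: "t \<in> x"
  have t_mor: "t \<in> pg_mor L" and mt: "pg_s L m = pg_r L t"
    using filter_mor[OF x t] filter_r_eq[OF x t] sm by simp_all
  then have "m \<star> t \<in> fmult L m x"
    unfolding fmult_def using comp_in_mor[OF m] pprec_refl t by blast
  then show "t \<in> shift L (fmult L m x) (pg_d L m)"
    unfolding shift_eq[OF mx mem_fmult_self[OF x m sm]] using t_mor mt by simp
qed

lemma path_groupoid_common_tail:
  assumes "(x, q, y) \<in> path_groupoid Q P L"
  obtains z u v where "z \<in> path_space L" "u \<in> pg_mor L" "v \<in> pg_mor L"
    "pg_s L u = filter_r L z" "pg_s L v = filter_r L z"
    "x = fmult L u z" "y = fmult L v z" "q = pg_d L u \<otimes>\<^bsub>Q\<^esub> inv\<^bsub>Q\<^esub> pg_d L v"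
proof -
  obtain u v where x: "x \<in> path_space L" "u \<in> x" and y: "y \<in> path_space L" "v \<in> y"
    and q: "q = pg_d L u \<otimes>\<^bsub>Q\<^esub> inv\<^bsub>Q\<^esub> pg_d L v"
    and tails_eq: "shift L x (pg_d L u) = shift L y (pg_d L v)"
    using assms unfolding path_groupoid_def in_dom_def by blast
  let ?z = "shift L x (pg_d L u)"
  have x_filter: "is_filter L x" and y_filter: "is_filter L y"
    using x y unfolding path_space_def by auto
  have "?z \<in> path_space L" and "u \<in> pg_mor L" and "v \<in> pg_mor L"
    using shift_in_path_space[OF x] filter_mor[OF x_filter x(2)] filter_mor[OF y_filter y(2)] .
  moreover have "pg_s L u = filter_r L ?z" and "pg_s L v = filter_r L ?z"
    using filter_r_shift[OF x_filter x(2)] filter_r_shift[OF y_filter y(2)] tails_eq by simp_all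
  moreover have "x = fmult L u ?z" and "y = fmult L v ?z"
    using fmult_shift[OF x_filter x(2)] fmult_shift[OF y_filter y(2)] tails_eq by simp_all
  ultimately show ?thesis
    using that q by blast
qed

lemma fmult_in_path_groupoid:
  assumes x: "is_filter L x"
    and m: "m \<in> pg_mor L" "pg_s L m = filter_r L x" and n: "n \<in> pg_mor L" "pg_s L n = filter_r L x"
    and mx: "fmult L m x \<in> path_space L" and nx: "fmult L n x \<in> path_space L"
  shows "(fmult L m x, pg_d L m \<otimes>\<^bsub>Q\<^esub> inv\<^bsub>Q\<^esub> pg_d L n, fmult L n x) \<in> path_groupoid Q P L"
proof -
  have "in_dom L (fmult L m x) (pg_d L m)" and "in_dom L (fmult L n x) (pg_d L n)"
    unfolding in_dom_def using mem_fmult_self[OF x m] mem_fmult_self[OF x n] by blast+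
  moreover have "shift L (fmult L m x) (pg_d L m) = shift L (fmult L n x) (pg_d L n)"
    using mx nx shift_fmult[OF x m] shift_fmult[OF x n] unfolding path_space_def by simp
  ultimately show ?thesis
    unfolding path_groupoid_def using mx nx d_in_P[OF m(1)] d_in_P[OF n(1)] by blast
qed

end

theorem proposition5p21:
  fixes Q :: "('q, 'b) monoid_scheme" and P :: "'q set" and L :: "('m, 'q) pgraph"
    and g :: "'m set \<times> 'q \<times> 'm set"
  assumes "wqlo Q P"
    and "is_pgraph Q P L"
    and "FA L \<noteq> {}"
    and "g \<in> path_space L \<times> carrier Q \<times> path_space L"
  shows "g \<in> path_groupoid Q P L \<longleftrightarrow>
    (\<exists>x\<in>path_space L. \<exists>m\<in>pg_mor L. \<exists>n\<in>pg_mor L.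
       pg_s L m = filter_r L x \<and> pg_s L n = filter_r L x \<and>
       g = (fmult L m x, pg_d L m \<otimes>\<^bsub>Q\<^esub> inv\<^bsub>Q\<^esub> pg_d L n, fmult L n x))"
proof -
  interpret p_graph Q P L
    using assms(1,2) unfolding wqlo_def by (intro p_graph.intro p_graph_axioms.intro) auto
  show ?thesis (is "?in_groupoid \<longleftrightarrow> ?decomposed")
  proof
    assume ?in_groupoid
    obtain x q y where g: "g = (x, q, y)"
      by (cases g)
    show ?decomposed
      using \<open>?in_groupoid\<close> unfolding g by (elim path_groupoid_common_tail) blast
  next
    assume ?decomposed
    then obtain x m n where "x \<in> path_space L" "m \<in> pg_mor L" "pg_s L m = filter_r L x"
      "n \<in> pg_mor L" "pg_s L n = filter_r L x"
      and g: "g = (fmult L m x, pg_d L m \<otimes>\<^bsub>Q\<^esub> inv\<^bsub>Q\<^esub> pg_d L n, fmult L n x)"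
      by blast
    moreover have "fmult L m x \<in> path_space L" and "fmult L n x \<in> path_space L"
      using assms(4) g by auto
    ultimately show ?in_groupoid
      using fmult_in_path_groupoid unfolding path_space_def by blast
  qed
qed

end
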